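(* Let $X,Y$ be metrizable vector spaces over $K$ with metrics $d_X,d_Y$, and let $F:X\to Y$. For $r>0$ put $B_X(r)=\{x\in X:d_X(x,0)<r\}$ and $B_Y(r)=\{y\in Y:d_Y(y,0)<r\}$. (i) If $F\in B_d(X,Y)$, then for every $\epsilon_1>0$ there exists $\epsilon_2>0$ with $F[B_X(\epsilon_1)]\subset B_Y(\epsilon_2)$. (ii) Conversely, suppose that the limit $\lim_{x\to0}\frac{d_Y[F(x),0]}{d_X(x,0)}$ exists and is finite, that there are $\epsilon,\epsilon^*>0$ such that $F$ maps the complement of $B_X(\epsilon)$ into a bounded subset of $B_Y(\epsilon^* )$, and that for every $\epsilon_1>0$ there exists $\epsilon_2>0$ with $F[B_X(\epsilon_1)]\subset B_Y(\epsilon_2)$. Then $F\in B_d(X,Y)$.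
   Context: $K$ is $\mathbb{R}$ or $\mathbb{C}$. For maps $F_1,F_2:X\to Y$, $d(F_1,F_2)=\max\left\{\sup_{x\neq0,x\in X}\frac{d_Y[F_1(x),F_2(x)]}{d_X(x,0)},\ d_Y[F_1(0),F_2(0)]\right\}\in[0,\infty]$, and $B_d(X,Y)$ is the set of maps $F:X\to Y$ with $d(F,0)<\infty$. *)

theory Defs
  imports "HOL-Analysis.Analysis"
begin

definition is_metric :: "('a \<Rightarrow> 'a \<Rightarrow> real) \<Rightarrow> bool" where
  "is_metric d \<longleftrightarrow>
     (\<forall>x y. 0 \<le> d x y) \<and> (\<forall>x y. d x y = 0 \<longleftrightarrow> x = y) \<and>
     (\<forall>x y. d x y = d y x) \<and> (\<forall>x y z. d x z \<le> d x y + d y z)"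

definition metric_vector_space :: "('a::real_vector \<Rightarrow> 'a \<Rightarrow> real) \<Rightarrow> bool" where
  "metric_vector_space d \<longleftrightarrow> is_metric d \<and>
     (\<forall>xs x ys y. (\<lambda>n. d (xs n) x) \<longlonglongrightarrow> 0 \<longrightarrow> (\<lambda>n. d (ys n) y) \<longlonglongrightarrow> 0 \<longrightarrow>
        (\<lambda>n. d (xs n + ys n) (x + y)) \<longlonglongrightarrow> 0) \<and>
     (\<forall>as a xs x. as \<longlonglongrightarrow> a \<longrightarrow> (\<lambda>n. d (xs n) x) \<longlonglongrightarrow> 0 \<longrightarrow>
        (\<lambda>n. d (as n *\<^sub>R xs n) (a *\<^sub>R x)) \<longlonglongrightarrow> 0)"

definition ball0 :: "('a::zero \<Rightarrow> 'a \<Rightarrow> real) \<Rightarrow> real \<Rightarrow> 'a set" where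
  "ball0 d r = {x. d x 0 < r}"

definition dbounded :: "('a \<Rightarrow> 'a \<Rightarrow> real) \<Rightarrow> 'a set \<Rightarrow> bool" where
  "dbounded d S \<longleftrightarrow> (\<exists>x c. \<forall>y\<in>S. d x y \<le> c)"

definition map_dist ::
  "('a::zero \<Rightarrow> 'a \<Rightarrow> real) \<Rightarrow> ('b \<Rightarrow> 'b \<Rightarrow> real) \<Rightarrow> ('a \<Rightarrow> 'b) \<Rightarrow> ('a \<Rightarrow> 'b) \<Rightarrow> ereal" where
  "map_dist dX dY F1 F2 =
     max (SUP x\<in>{x. x \<noteq> 0}. ereal (dY (F1 x) (F2 x) / dX x 0)) (ereal (dY (F1 0) (F2 0)))"

definition Bd :: "('a::zero \<Rightarrow> 'a \<Rightarrow> real) \<Rightarrow> ('b::zero \<Rightarrow> 'b \<Rightarrow> real) \<Rightarrow> ('a \<Rightarrow> 'b) set" where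
  "Bd dX dY = {F. map_dist dX dY F (\<lambda>_. 0) < \<infinity>}"

end

theory Submission
  imports Defs
begin

text \<open>Membership in \<open>Bd dX dY\<close> means exactly that the ratio \<open>dY (F x) 0 / dX x 0\<close> is bounded
  above on \<open>x \<noteq> 0\<close>. Such a bound turns \<open>dX x 0 < \<epsilon>\<^sub>1\<close> into a bound on \<open>dY (F x) 0\<close>, giving (i).
  For (ii), the finite limit bounds the ratio on a punctured ball \<open>dX x 0 < \<delta>\<close>, while outside it
  the ratio is at most \<open>C / \<delta>\<close>, where \<open>C\<close> bounds \<open>dY (F x) 0\<close> on the ball \<open>B\<^sub>X(\<epsilon>)\<close> and
  on its complement.\<close>

lemma is_metric_pos:
  assumes "is_metric d" and "x \<noteq> y"
  shows "0 < d x y"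
  using assms unfolding is_metric_def by (metis order_le_less)

lemma Bd_iff_ratio_bdd_above:
  fixes dX :: "'a::zero \<Rightarrow> 'a \<Rightarrow> real" and dY :: "'b::zero \<Rightarrow> 'b \<Rightarrow> real"
    and F :: "'a \<Rightarrow> 'b"
  shows "F \<in> Bd dX dY \<longleftrightarrow> (\<exists>M. \<forall>x. x \<noteq> 0 \<longrightarrow> dY (F x) 0 / dX x 0 \<le> M)"
proof -
  let ?S = "SUP x\<in>{x. x \<noteq> 0}. ereal (dY (F x) 0 / dX x 0)"
  have "F \<in> Bd dX dY \<longleftrightarrow> ?S < \<infinity>"
    unfolding Bd_def map_dist_def mem_Collect_eq max_less_iff_conj by simp
  also have "\<dots> \<longleftrightarrow> (\<exists>M. ?S \<le> ereal M)"
  proof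
    assume "?S < \<infinity>"
    then obtain n :: nat where "?S < ereal (real n)"
      using less_PInf_Ex_of_nat by auto
    then show "\<exists>M. ?S \<le> ereal M"
      using less_imp_le by blast
  next
    assume "\<exists>M. ?S \<le> ereal M"
    then show "?S < \<infinity>"
      using le_less_trans by fastforce
  qed
  also have "\<dots> \<longleftrightarrow> (\<exists>M. \<forall>x. x \<noteq> 0 \<longrightarrow> dY (F x) 0 / dX x 0 \<le> M)"
    by (simp add: SUP_le_iff)
  finally show ?thesis .
qed

lemma Bd_imp_ball0_image_bounded:
  fixes dX :: "'a::zero \<Rightarrow> 'a \<Rightarrow> real" and dY :: "'b::zero \<Rightarrow> 'b \<Rightarrow> real"
    and F :: "'a \<Rightarrow> 'b"
  assumes "is_metric dX"
    and "F \<in> Bd dX dY" and "e1 > 0"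
  shows "\<exists>e2>0. F ` ball0 dX e1 \<subseteq> ball0 dY e2"
proof -
  have pos: "\<And>x. x \<noteq> 0 \<Longrightarrow> 0 < dX x 0"
    using \<open>is_metric dX\<close> by (rule is_metric_pos)
  obtain M where ratio: "\<And>x. x \<noteq> 0 \<Longrightarrow> dY (F x) 0 / dX x 0 \<le> M"
    using \<open>F \<in> Bd dX dY\<close> unfolding Bd_iff_ratio_bdd_above by blast
  define e2 where "e2 = max M 0 * e1 + \<bar>dY (F 0) 0\<bar> + 1"
  have "0 \<le> max M 0 * e1"
    using \<open>e1 > 0\<close> by simp
  then have "e2 > 0"
    unfolding e2_def by linarith
  moreover have "dY (F x) 0 < e2" if "dX x 0 < e1" for x
  proof (cases "x = 0")
    case False
    have "dY (F x) 0 \<le> M * dX x 0"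
      using ratio[OF False] pos[OF False] by (simp add: divide_le_eq mult.commute)
    also have "\<dots> \<le> max M 0 * e1"
      using pos[OF False] that by (intro mult_mono) auto
    finally show ?thesis
      unfolding e2_def by linarith
  qed (use \<open>0 \<le> max M 0 * e1\<close> in \<open>simp add: e2_def\<close>)
  ultimately show ?thesis
    unfolding ball0_def by blast
qed

lemma dist0_bounded_if_ball0_and_complement_images_bounded:
  assumes "F ` ball0 dX e \<subseteq> ball0 dY r1" and "F ` (- ball0 dX e) \<subseteq> ball0 dY r2"
  shows "dY (F x) 0 \<le> max r1 r2"
  using assms unfolding ball0_def by (cases "dX x 0 < e") (auto intro: less_imp_le)

lemma Bd_if_ratio_bounded_near_zero_and_dist0_bounded:
  fixes dX :: "'a::zero \<Rightarrow> 'a \<Rightarrow> real" and dY :: "'b::zero \<Rightarrow> 'b \<Rightarrow> real"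
    and F :: "'a \<Rightarrow> 'b"
  assumes "is_metric dX"
    and "\<delta> > 0"
    and near: "\<And>x. x \<noteq> 0 \<Longrightarrow> dX x 0 < \<delta> \<Longrightarrow> dY (F x) 0 / dX x 0 \<le> A"
    and bounded: "\<And>x. dY (F x) 0 \<le> C"
  shows "F \<in> Bd dX dY"
  unfolding Bd_iff_ratio_bdd_above
proof (intro exI allI impI)
  fix x :: 'a
  assume "x \<noteq> 0"
  then have pos: "0 < dX x 0"
    using \<open>is_metric dX\<close> by (rule is_metric_pos[rotated])
  show "dY (F x) 0 / dX x 0 \<le> max A (max C 0 / \<delta>)"
  proof (cases "dX x 0 < \<delta>")
    case False
    have "dY (F x) 0 \<le> max C 0"
      using bounded[of x] by simp
    then have "dY (F x) 0 / dX x 0 \<le> max C 0 / dX x 0"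
      using pos by (simp add: divide_right_mono)
    also have "\<dots> \<le> max C 0 / \<delta>"
      using False \<open>\<delta> > 0\<close> by (intro divide_left_mono) auto
    finally show ?thesis
      by simp
  qed (use near \<open>x \<noteq> 0\<close> in force)
qed

lemma Bd_if_ratio_converges_and_image_bounded:
  fixes dX :: "'a::zero \<Rightarrow> 'a \<Rightarrow> real" and dY :: "'b::zero \<Rightarrow> 'b \<Rightarrow> real"
    and F :: "'a \<Rightarrow> 'b"
  assumes "is_metric dX"
    and lim: "\<forall>\<epsilon>>0. \<exists>\<delta>>0. \<forall>x. x \<noteq> 0 \<and> dX x 0 < \<delta> \<longrightarrow> \<bar>dY (F x) 0 / dX x 0 - L\<bar> < \<epsilon>"
    and "F ` ball0 dX e \<subseteq> ball0 dY r1" and "F ` (- ball0 dX e) \<subseteq> ball0 dY r2"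
  shows "F \<in> Bd dX dY"
proof -
  obtain \<delta> where "\<delta> > 0"
    and close: "\<forall>x. x \<noteq> 0 \<and> dX x 0 < \<delta> \<longrightarrow> \<bar>dY (F x) 0 / dX x 0 - L\<bar> < 1"
    using lim zero_less_one by blast
  have near: "dY (F x) 0 / dX x 0 \<le> L + 1" if "x \<noteq> 0" "dX x 0 < \<delta>" for x
    using close that by (force simp: abs_less_iff)
  have bounded: "dY (F x) 0 \<le> max r1 r2" for x
    using assms(3,4) by (rule dist0_bounded_if_ball0_and_complement_images_bounded)
  show ?thesis
    using \<open>\<delta> > 0\<close> near bounded
    by (rule Bd_if_ratio_bounded_near_zero_and_dist0_bounded[OF \<open>is_metric dX\<close>])
qed

theorem theorem8:
  fixes dX :: "'a::real_vector \<Rightarrow> 'a \<Rightarrow> real" and dY :: "'b::real_vector \<Rightarrow> 'b \<Rightarrow> real"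
    and F :: "'a \<Rightarrow> 'b"
  assumes "metric_vector_space dX" and "metric_vector_space dY"
  shows "(F \<in> Bd dX dY \<longrightarrow>
            (\<forall>e1>0. \<exists>e2>0. F ` ball0 dX e1 \<subseteq> ball0 dY e2))
       \<and> ((\<exists>L::real. \<forall>e>0. \<exists>\<delta>>0. \<forall>x. x \<noteq> 0 \<and> dX x 0 < \<delta> \<longrightarrow>
               \<bar>dY (F x) 0 / dX x 0 - L\<bar> < e)
          \<and> (\<exists>e>0. \<exists>e'>0. \<exists>S. dbounded dY S \<and> S \<subseteq> ball0 dY e' \<and> F ` (- ball0 dX e) \<subseteq> S)
          \<and> (\<forall>e1>0. \<exists>e2>0. F ` ball0 dX e1 \<subseteq> ball0 dY e2)
          \<longrightarrow> F \<in> Bd dX dY)"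
proof -
  have metric: "is_metric dX"
    using assms(1) unfolding metric_vector_space_def by blast
  have "F \<in> Bd dX dY" if
    lim: "\<exists>L::real. \<forall>e>0. \<exists>\<delta>>0. \<forall>x. x \<noteq> 0 \<and> dX x 0 < \<delta> \<longrightarrow> \<bar>dY (F x) 0 / dX x 0 - L\<bar> < e"
    and outer: "\<exists>e>0. \<exists>e'>0. \<exists>S. dbounded dY S \<and> S \<subseteq> ball0 dY e' \<and> F ` (- ball0 dX e) \<subseteq> S"
    and inner: "\<forall>e1>0. \<exists>e2>0. F ` ball0 dX e1 \<subseteq> ball0 dY e2"
  proof -
    obtain e e' S where "e > 0" "S \<subseteq> ball0 dY e'" "F ` (- ball0 dX e) \<subseteq> S"
      using outer by blast
    obtain L where "\<forall>e>0. \<exists>\<delta>>0. \<forall>x. x \<noteq> 0 \<and> dX x 0 < \<delta> \<longrightarrow> \<bar>dY (F x) 0 / dX x 0 - L\<bar> < e"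
      using lim by blast
    moreover obtain e2 where "F ` ball0 dX e \<subseteq> ball0 dY e2"
      using inner \<open>e > 0\<close> by blast
    moreover have "F ` (- ball0 dX e) \<subseteq> ball0 dY e'"
      using \<open>S \<subseteq> ball0 dY e'\<close> \<open>F ` (- ball0 dX e) \<subseteq> S\<close> by blast
    ultimately show ?thesis
      by (rule Bd_if_ratio_converges_and_image_bounded[OF metric])
  qed
  moreover have "\<exists>e2>0. F ` ball0 dX e1 \<subseteq> ball0 dY e2" if "F \<in> Bd dX dY" "e1 > 0" for e1
    using Bd_imp_ball0_image_bounded[OF metric that] .
  ultimately show ?thesis
    by blast
qed

end
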